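(* Let $\Sigma\subseteq\mathcal L_\Diamond$ be finite and closed under subformulas and let $\mathcal I$ be a finite weak $\Sigma$-quasimodel such that for every deterministic weak $\mathcal L_\Diamond$-quasimodel $\mathcal A$ the relation $\rightharpoonup\ \subseteq|\mathcal I|\times|\mathcal A|$ is a surjective dynamic simulation. Let $P=\{w\in|\mathcal I|:\not\vdash\mathrm{Sim}(w)\}$. Then the restriction $\mathcal I\upharpoonright P=(P,\preccurlyeq_{\mathcal I}\cap(P\times P),S_{\mathcal I}\cap(P\times P),\ell_{\mathcal I}\upharpoonright P)$ is a (finite) $\Sigma$-quasimodel.
   Context: $\mathcal L_\Diamond$ is the propositional language with $\bot,\wedge,\vee,\to$ and unary modalities $\bigcirc$, $\Diamond$. ${\sf ITL}^0_\Diamond$ is axiomatized by all intuitionistic propositional tautologies, $\neg\bigcirc\bot$, $\bigcirc\varphi\wedge\bigcirc\psi\to\bigcirc(\varphi\wedge\psi)$, $\bigcirc(\varphi\vee\psi)\to\bigcirc\varphi\vee\bigcirc\psi$, $\bigcirc(\varphi\to\psi)\to(\bigcirc\varphi\to\bigcirc\psi)$, $\varphi\vee\bigcirc\Diamond\varphi\to\Diamond\varphi$, closed under modus ponens and the rules $\varphi/\bigcirc\varphi$, $(\varphi\to\psi)/(\Diamond\varphi\to\Diamond\psi)$, $(\bigcirc\varphi\to\varphi)/(\Diamond\varphi\to\varphi)$; $\vdash\varphi$ means $\varphi\in{\sf ITL}^0_\Diamond$. Types: a $\Sigma$-type is a pair $\Phi=(\Phi^-;\Phi^+)$ of subsets of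 $\Sigma$ with $\Phi^-\cap\Phi^+=\varnothing$, $\Phi^-\cup\Phi^+=\Sigma$, $\bot\notin\Phi^+$, $\wedge,\vee$ in $\Phi^+$ behaving classically, ($\varphi\to\psi\in\Phi^+\Rightarrow\varphi\in\Phi^-$ or $\psi\in\Phi^+$), ($\Diamond\varphi\in\Phi^-\Rightarrow\varphi\in\Phi^-$). $\Phi\preccurlyeq_T\Psi$ iff $\Phi^+\subseteq\Psi^+$; $\Phi\subseteq_T\Psi$ iff $\Phi^-\subseteq\Psi^-$, $\Phi^+\subseteq\Psi^+$. $\Phi\,S_T\,\Psi$ iff: $\bigcirc\varphi\in\Phi^+\Rightarrow\varphi\in\Psi^+$; $\bigcirc\varphi\in\Phi^-\Rightarrow\varphi\in\Psi^-$; ($\Diamond\varphi\in\Phi^+$, $\varphi\in\Phi^-$)$\Rightarrow\Diamond\varphi\in\Psi^+$; $\Diamond\varphi\in\Phi^-\Rightarrow\Diamond\varphi\in\Psi^-$. A $\Sigma$-labelled frame is $(W,\preccurlyeq,\ell)$, $\preccurlyeq$ a partial order, $\ell$ mapping to $\Sigma$-types, monotone w.r.t. $\preccurlyeq_T$, and if $\varphi\to\psi\in\ell^-(w)$ then some $v\succcurlyeq w$ has $\varphi\in\ell^+(v)$, $\psi\in\ell^-(v)$. A weak $\Sigma$-quasimodel adds $S\subseteq W\times W$ forward-confluent (if $w\preccurlyeq w'$, $w\,S\,v$ then some $v'\succcurlyeq v$ has $w'\,S\,v'$) and sensible ($w\,S\,v\Rightarrow\ell(w)\,S_T\,\ell(v)$);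 deterministic if $S$ is a function. A $\Sigma$-quasimodel is a weak $\Sigma$-quasimodel whose $S$ is also serial and $\omega$-sensible (if $\Diamond\varphi\in\ell^+(w)$ there are $n\ge0$ and $v$ with $w\,S^n\,v$ and $\varphi\in\ell^+(v)$). A simulation from a $\Sigma$-labelled $\mathcal X$ to a $\Delta$-labelled $\mathcal Y$ ($\Sigma\subseteq\Delta$) is a forward-confluent $E\subseteq|\mathcal X|\times|\mathcal Y|$ with $x\,E\,y\Rightarrow\ell(x)\subseteq_T\ell(y)$; $x\rightharpoonup y$ iff some simulation relates them; $E$ is dynamic if $x\,E\,y$ and $y\,S\,y'$ imply some $x'$ with $x\,S\,x'$, $x'\,E\,y'$; surjective if every point of $\mathcal A$ is in its range. $\mathrm{Sim}(w)=\bigwedge\ell^+(w)\to\big(\bigvee\ell^-(w)\vee\bigvee_{v\succ w}\mathrm{Sim}(v)\big)$, defined by backwards induction on $\prec$ ($\bigwedge\varnothing=\top$, $\bigvee\varnothing=\bot$). *)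

theory Defs
  imports Main
begin

datatype fm = Var nat | Bot | And fm fm | Or fm fm | Imp fm fm | Nxt fm | Dia fm

definition Top :: fm where "Top = Imp Bot Bot"

fun subf :: "fm \<Rightarrow> fm set" where
  "subf (Var n) = {Var n}"
| "subf Bot = {Bot}"
| "subf (And p q) = insert (And p q) (subf p \<union> subf q)"
| "subf (Or p q) = insert (Or p q) (subf p \<union> subf q)"
| "subf (Imp p q) = insert (Imp p q) (subf p \<union> subf q)"
| "subf (Nxt p) = insert (Nxt p) (subf p)"
| "subf (Dia p) = insert (Dia p) (subf p)"

definition sub_closed :: "fm set \<Rightarrow> bool" where
  "sub_closed \<Sigma> \<longleftrightarrow> (\<forall>\<phi>\<in>\<Sigma>. subf \<phi> \<subseteq> \<Sigma>)"

inductive prov :: "fm \<Rightarrow> bool" where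
  ipc1: "prov (Imp p (Imp q p))"
| ipc2: "prov (Imp (Imp p (Imp q r)) (Imp (Imp p q) (Imp p r)))"
| ipc3: "prov (Imp (And p q) p)"
| ipc4: "prov (Imp (And p q) q)"
| ipc5: "prov (Imp p (Imp q (And p q)))"
| ipc6: "prov (Imp p (Or p q))"
| ipc7: "prov (Imp q (Or p q))"
| ipc8: "prov (Imp (Imp p r) (Imp (Imp q r) (Imp (Or p q) r)))"
| ipc9: "prov (Imp Bot p)"
| nxt_bot: "prov (Imp (Nxt Bot) Bot)"
| nxt_and: "prov (Imp (And (Nxt p) (Nxt q)) (Nxt (And p q)))"
| nxt_or: "prov (Imp (Nxt (Or p q)) (Or (Nxt p) (Nxt q)))"
| nxt_imp: "prov (Imp (Nxt (Imp p q)) (Imp (Nxt p) (Nxt q)))"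
| dia_fix: "prov (Imp (Or p (Nxt (Dia p))) (Dia p))"
| mp: "prov (Imp p q) \<Longrightarrow> prov p \<Longrightarrow> prov q"
| nec: "prov p \<Longrightarrow> prov (Nxt p)"
| dia_mono: "prov (Imp p q) \<Longrightarrow> prov (Imp (Dia p) (Dia q))"
| dia_ind: "prov (Imp (Nxt p) p) \<Longrightarrow> prov (Imp (Dia p) p)"

type_synonym ftype = "fm set \<times> fm set"

definition is_type :: "fm set \<Rightarrow> ftype \<Rightarrow> bool" where
  "is_type \<Sigma> \<Phi> \<longleftrightarrow> (let Fm = fst \<Phi>; Fp = snd \<Phi> in
     Fm \<inter> Fp = {} \<and> Fm \<union> Fp = \<Sigma> \<and> Bot \<notin> Fp
     \<and> (\<forall>p q. And p q \<in> \<Sigma> \<longrightarrow> (And p q \<in> Fp \<longleftrightarrow> p \<in> Fp \<and> q \<in> Fp))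
     \<and> (\<forall>p q. Or p q \<in> \<Sigma> \<longrightarrow> (Or p q \<in> Fp \<longleftrightarrow> p \<in> Fp \<or> q \<in> Fp))
     \<and> (\<forall>p q. Imp p q \<in> Fp \<longrightarrow> p \<in> Fm \<or> q \<in> Fp)
     \<and> (\<forall>p. Dia p \<in> Fm \<longrightarrow> p \<in> Fm))"

definition subT :: "ftype \<Rightarrow> ftype \<Rightarrow> bool" where
  "subT \<Phi> \<Psi> \<longleftrightarrow> fst \<Phi> \<subseteq> fst \<Psi> \<and> snd \<Phi> \<subseteq> snd \<Psi>"

definition sensT :: "ftype \<Rightarrow> ftype \<Rightarrow> bool" where
  "sensT \<Phi> \<Psi> \<longleftrightarrow>
     (\<forall>p. Nxt p \<in> snd \<Phi> \<longrightarrow> p \<in> snd \<Psi>)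
   \<and> (\<forall>p. Nxt p \<in> fst \<Phi> \<longrightarrow> p \<in> fst \<Psi>)
   \<and> (\<forall>p. Dia p \<in> snd \<Phi> \<and> p \<in> fst \<Phi> \<longrightarrow> Dia p \<in> snd \<Psi>)
   \<and> (\<forall>p. Dia p \<in> fst \<Phi> \<longrightarrow> Dia p \<in> fst \<Psi>)"

record 'w kframe =
  pts :: "'w set"
  le  :: "'w \<Rightarrow> 'w \<Rightarrow> bool"
  rel :: "'w \<Rightarrow> 'w \<Rightarrow> bool"
  lab :: "'w \<Rightarrow> ftype"

definition labelled_frame :: "fm set \<Rightarrow> 'w kframe \<Rightarrow> bool" where
  "labelled_frame \<Sigma> F \<longleftrightarrow>
     (\<forall>x y. le F x y \<longrightarrow> x \<in> pts F \<and> y \<in> pts F)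
   \<and> (\<forall>x\<in>pts F. le F x x)
   \<and> (\<forall>x y z. le F x y \<and> le F y z \<longrightarrow> le F x z)
   \<and> (\<forall>x y. le F x y \<and> le F y x \<longrightarrow> x = y)
   \<and> (\<forall>w\<in>pts F. is_type \<Sigma> (lab F w))
   \<and> (\<forall>w v. le F w v \<longrightarrow> snd (lab F w) \<subseteq> snd (lab F v))
   \<and> (\<forall>w\<in>pts F. \<forall>p q. Imp p q \<in> fst (lab F w) \<longrightarrow>
         (\<exists>v\<in>pts F. le F w v \<and> p \<in> snd (lab F v) \<and> q \<in> fst (lab F v)))"

definition forward_confluent_rel :: "'w kframe \<Rightarrow> bool" where
  "forward_confluent_rel F \<longleftrightarrow>
     (\<forall>w w' v. le F w w' \<and> rel F w v \<longrightarrow> (\<exists>v'\<in>pts F. le F v v' \<and> rel F w' v'))"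

definition weak_qm :: "fm set \<Rightarrow> 'w kframe \<Rightarrow> bool" where
  "weak_qm \<Sigma> F \<longleftrightarrow> labelled_frame \<Sigma> F
     \<and> (\<forall>x y. rel F x y \<longrightarrow> x \<in> pts F \<and> y \<in> pts F)
     \<and> forward_confluent_rel F
     \<and> (\<forall>w v. rel F w v \<longrightarrow> sensT (lab F w) (lab F v))"

definition deterministic :: "'w kframe \<Rightarrow> bool" where
  "deterministic F \<longleftrightarrow> (\<forall>w\<in>pts F. \<exists>!v. rel F w v)"

definition quasimodel :: "fm set \<Rightarrow> 'w kframe \<Rightarrow> bool" where
  "quasimodel \<Sigma> F \<longleftrightarrow> weak_qm \<Sigma> F
     \<and> (\<forall>w\<in>pts F. \<exists>v. rel F w v)
     \<and> (\<forall>w\<in>pts F. \<forall>p. Dia p \<in> snd (lab F w) \<longrightarrow>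
          (\<exists>n v. (rel F ^^ n) w v \<and> p \<in> snd (lab F v)))"

definition is_simulation :: "'a kframe \<Rightarrow> 'b kframe \<Rightarrow> ('a \<Rightarrow> 'b \<Rightarrow> bool) \<Rightarrow> bool" where
  "is_simulation X Y E \<longleftrightarrow>
     (\<forall>x y. E x y \<longrightarrow> x \<in> pts X \<and> y \<in> pts Y)
   \<and> (\<forall>x x' y. E x y \<and> le X x x' \<longrightarrow> (\<exists>y'\<in>pts Y. le Y y y' \<and> E x' y'))
   \<and> (\<forall>x y. E x y \<longrightarrow> subT (lab X x) (lab Y y))"

definition simulates :: "'a kframe \<Rightarrow> 'b kframe \<Rightarrow> 'a \<Rightarrow> 'b \<Rightarrow> bool" where
  "simulates X Y x y \<longleftrightarrow> (\<exists>E. is_simulation X Y E \<and> E x y)"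

definition dynamic :: "'a kframe \<Rightarrow> 'b kframe \<Rightarrow> ('a \<Rightarrow> 'b \<Rightarrow> bool) \<Rightarrow> bool" where
  "dynamic X Y E \<longleftrightarrow> (\<forall>x y y'. E x y \<and> rel Y y y' \<longrightarrow> (\<exists>x'. rel X x x' \<and> E x' y'))"

definition surjective_sim :: "'a kframe \<Rightarrow> 'b kframe \<Rightarrow> ('a \<Rightarrow> 'b \<Rightarrow> bool) \<Rightarrow> bool" where
  "surjective_sim X Y E \<longleftrightarrow> (\<forall>y\<in>pts Y. \<exists>x. E x y)"

definition BigAnd :: "fm set \<Rightarrow> fm" where
  "BigAnd A = foldr And (SOME xs. set xs = A) Top"

definition BigOr :: "fm set \<Rightarrow> fm" where
  "BigOr A = foldr Or (SOME xs. set xs = A) Bot"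

fun simf :: "'w kframe \<Rightarrow> nat \<Rightarrow> 'w \<Rightarrow> fm" where
  "simf F 0 w = Bot"
| "simf F (Suc n) w = Imp (BigAnd (snd (lab F w)))
     (Or (BigOr (fst (lab F w))) (BigOr (simf F n ` {v\<in>pts F. le F w v \<and> v \<noteq> w})))"

text \<open>For a finite frame the recursion depth card (pts F) exceeds the height of every point,
  so this is the backwards-inductive definition of Sim(w).\<close>
definition Sim :: "'w kframe \<Rightarrow> 'w \<Rightarrow> fm" where
  "Sim F w = simf F (card (pts F)) w"

definition restrict_frame :: "'w kframe \<Rightarrow> 'w set \<Rightarrow> 'w kframe" where
  "restrict_frame F P = \<lparr> pts = P,
     le = (\<lambda>x y. x \<in> P \<and> y \<in> P \<and> le F x y),
     rel = (\<lambda>x y. x \<in> P \<and> y \<in> P \<and> rel F x y),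
     lab = lab F \<rparr>"

end

theory Submission imports Defs begin

text \<open>The prime theories of the logic form a deterministic weak quasimodel, and by the
  completeness argument Sim(w) is unprovable exactly when some prime theory simulates w. On such
  points the dynamic simulation into this canonical model supplies successors, so the restriction
  is serial. For \<omega>-sensibility, suppose \<Diamond>p holds at w but p fails along every path from w;
  then the conjunction \<theta> of Sim(u) over all u reachable from w satisfies \<turnstile> p \<rightarrow> \<theta> and
  \<turnstile> \<circle>\<theta> \<rightarrow> \<theta>, hence \<turnstile> \<Diamond>p \<rightarrow> \<theta> by the induction rule, so a prime theory simulating w
  would contain Sim(w).\<close>

lemma mem_subf_self: "\<phi> \<in> subf \<phi>"
  by (cases \<phi>) auto

inductive derivable :: "fm set \<Rightarrow> fm \<Rightarrow> bool" for H where
  derivable_hyp: "\<phi> \<in> H \<Longrightarrow> derivable H \<phi>"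
| derivable_prov: "prov \<phi> \<Longrightarrow> derivable H \<phi>"
| derivable_mp: "derivable H (Imp a b) \<Longrightarrow> derivable H a \<Longrightarrow> derivable H b"

lemma prov_imp_refl: "prov (Imp a a)"
  by (meson ipc1 ipc2 mp)

lemma derivable_mono: "derivable H \<phi> \<Longrightarrow> H \<subseteq> H' \<Longrightarrow> derivable H' \<phi>"
  by (induction rule: derivable.induct) (auto intro: derivable.intros)

lemma derivable_deduction: "derivable (insert a H) b \<Longrightarrow> derivable H (Imp a b)"
proof (induction rule: derivable.induct)
  case (derivable_hyp \<phi>)
  then show ?case
    by (metis derivable.intros insertE ipc1 prov_imp_refl)
next
  case (derivable_prov \<phi>)
  then show ?case by (meson derivable.intros ipc1)
next
  case (derivable_mp c d)
  then show ?case by (meson derivable.intros ipc2)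
qed

lemma derivable_empty_imp_prov: "derivable {} \<phi> \<Longrightarrow> prov \<phi>"
  by (induction rule: derivable.induct) (auto intro: mp)

lemma derivable_finite_subset:
  "derivable H \<phi> \<Longrightarrow> \<exists>F. finite F \<and> F \<subseteq> H \<and> derivable F \<phi>"
proof (induction rule: derivable.induct)
  case (derivable_hyp \<phi>)
  then show ?case by (intro exI[of _ "{\<phi>}"]) (auto intro: derivable.intros)
next
  case (derivable_prov \<phi>)
  then show ?case by (intro exI[of _ "{}"]) (auto intro: derivable.intros)
next
  case (derivable_mp a b)
  then obtain F1 F2 where "finite F1" "F1 \<subseteq> H" "derivable F1 (Imp a b)"
    and "finite F2" "F2 \<subseteq> H" "derivable F2 a"
    by blast
  then show ?case
    by (intro exI[of _ "F1 \<union> F2"]) (auto intro: derivable.derivable_mp derivable_mono)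
qed

lemma derivable_Or_elim:
  "derivable H (Or a b) \<Longrightarrow> derivable (insert a H) c \<Longrightarrow> derivable (insert b H) c
    \<Longrightarrow> derivable H c"
  by (meson derivable.intros derivable_deduction ipc8)

lemma prov_imp_trans: "prov (Imp a b) \<Longrightarrow> prov (Imp b c) \<Longrightarrow> prov (Imp a c)"
  by (meson derivable.intros derivable_deduction derivable_empty_imp_prov singletonI)

lemma prov_imp_Dia: "prov (Imp p (Dia p))"
  using prov_imp_trans[OF ipc6 dia_fix] .

lemma prov_Nxt_Dia_imp_Dia: "prov (Imp (Nxt (Dia p)) (Dia p))"
  using prov_imp_trans[OF ipc7 dia_fix] .

lemma prov_Nxt_mono: "prov (Imp a b) \<Longrightarrow> prov (Imp (Nxt a) (Nxt b))"
  by (meson mp nec nxt_imp)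

text \<open>The converse of the fixpoint axiom, obtained by the induction rule applied to
  p \<or> \<circle>\<Diamond>p, which is closed under \<circle>.\<close>
lemma prov_Dia_unfold: "prov (Imp (Dia p) (Or p (Nxt (Dia p))))"
proof -
  let ?t = "Or p (Nxt (Dia p))"
  have "derivable {Nxt ?t} ?t"
  proof (rule derivable_Or_elim)
    show "derivable {Nxt ?t} (Or (Nxt p) (Nxt (Nxt (Dia p))))"
      by (meson derivable.intros nxt_or singletonI)
    show "derivable (insert (Nxt p) {Nxt ?t}) ?t"
      by (meson derivable.intros insertI1 prov_Nxt_mono[OF prov_imp_Dia] ipc7)
    show "derivable (insert (Nxt (Nxt (Dia p))) {Nxt ?t}) ?t"
      by (meson derivable.intros insertI1 prov_Nxt_mono[OF prov_Nxt_Dia_imp_Dia] ipc7)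
  qed
  then have "prov (Imp (Dia ?t) ?t)"
    by (intro dia_ind derivable_empty_imp_prov derivable_deduction)
  then show ?thesis
    using prov_imp_trans[OF dia_mono[OF ipc6]] by blast
qed

section \<open>Prime theories\<close>

definition prime_theory :: "fm set \<Rightarrow> bool" where
  "prime_theory T \<longleftrightarrow> (\<forall>\<phi>. derivable T \<phi> \<longrightarrow> \<phi> \<in> T) \<and> Bot \<notin> T
     \<and> (\<forall>a b. Or a b \<in> T \<longrightarrow> a \<in> T \<or> b \<in> T)"

lemma prime_theory_extension:
  assumes "\<not> derivable H \<phi>"
  shows "\<exists>T. prime_theory T \<and> H \<subseteq> T \<and> \<phi> \<notin> T"
proof -
  let ?A = "{T. H \<subseteq> T \<and> \<not> derivable T \<phi>}"
  have "\<exists>M\<in>?A. \<forall>X\<in>?A. M \<subseteq> X \<longrightarrow> X = M"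
  proof (rule subset_Zorn_nonempty)
    fix C assume C: "C \<noteq> {}" "subset.chain ?A C"
    show "\<Union>C \<in> ?A"
    proof safe
      fix x assume "x \<in> H"
      moreover obtain X where "X \<in> C" using C(1) by blast
      ultimately show "x \<in> \<Union>C" using C(2) unfolding subset_chain_def by blast
    next
      assume "derivable (\<Union>C) \<phi>"
      then obtain F where F: "finite F" "F \<subseteq> \<Union>C" "derivable F \<phi>"
        using derivable_finite_subset by blast
      then obtain B where "B \<in> C" "F \<subseteq> B"
        using finite_subset_Union_chain[OF F(1,2) C] by blast
      then show False using derivable_mono F C by (auto simp: subset_chain_def)
    qed
  qed (use assms in blast)
  then obtain M where M: "H \<subseteq> M" "\<not> derivable M \<phi>"
    and maximal: "\<And>X. H \<subseteq> X \<Longrightarrow> \<not> derivable X \<phi> \<Longrightarrow> M \<subseteq> X \<Longrightarrow> X = M"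
    by auto
  have insert_derives: "derivable (insert a M) \<phi>" if "a \<notin> M" for a
    using maximal[of "insert a M"] M that by blast
  have closed: "\<psi> \<in> M" if "derivable M \<psi>" for \<psi>
  proof (rule ccontr)
    assume "\<psi> \<notin> M"
    then have "derivable M (Imp \<psi> \<phi>)" using insert_derives derivable_deduction by blast
    then show False using that M derivable_mp by blast
  qed
  have "prime_theory M"
    unfolding prime_theory_def
  proof (intro conjI allI impI closed)
    show "Bot \<notin> M" using M by (meson derivable.intros ipc9)
  next
    fix a b assume "Or a b \<in> M"
    then show "a \<in> M \<or> b \<in> M"
      using insert_derives derivable_Or_elim[of M a b \<phi>] M derivable_hyp by blast
  qed
  then show ?thesis using M derivable_hyp by blast
qed

lemma prime_theory_prov: "prime_theory T \<Longrightarrow> prov \<phi> \<Longrightarrow> \<phi> \<in> T"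
  unfolding prime_theory_def by (meson derivable.intros)

lemma prime_theory_mp: "prime_theory T \<Longrightarrow> Imp a b \<in> T \<Longrightarrow> a \<in> T \<Longrightarrow> b \<in> T"
  unfolding prime_theory_def by (meson derivable.intros)

lemma prime_theory_prov_mp: "prime_theory T \<Longrightarrow> prov (Imp a b) \<Longrightarrow> a \<in> T \<Longrightarrow> b \<in> T"
  using prime_theory_prov prime_theory_mp by blast

lemma prime_theory_And_iff: "prime_theory T \<Longrightarrow> And a b \<in> T \<longleftrightarrow> a \<in> T \<and> b \<in> T"
  by (meson ipc3 ipc4 ipc5 prime_theory_mp prime_theory_prov_mp)

lemma prime_theory_Or_iff: "prime_theory T \<Longrightarrow> Or a b \<in> T \<longleftrightarrow> a \<in> T \<or> b \<in> T"
  by (meson ipc6 ipc7 prime_theory_def prime_theory_prov_mp)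

lemma prime_theory_Bot: "prime_theory T \<Longrightarrow> Bot \<notin> T"
  unfolding prime_theory_def by blast

lemma prime_theory_Top: "prime_theory T \<Longrightarrow> Top \<in> T"
  unfolding Top_def using prime_theory_prov prov_imp_refl by blast

lemma prime_theory_Imp_witness:
  assumes "prime_theory T" "Imp a b \<notin> T"
  shows "\<exists>T'. prime_theory T' \<and> T \<subseteq> T' \<and> a \<in> T' \<and> b \<notin> T'"
proof -
  have "\<not> derivable (insert a T) b"
    using assms derivable_deduction unfolding prime_theory_def by blast
  then show ?thesis using prime_theory_extension by blast
qed

lemma prime_theory_Imp_iff:
  assumes "prime_theory T"
  shows "Imp a b \<in> T \<longleftrightarrow> (\<forall>T'. prime_theory T' \<and> T \<subseteq> T' \<and> a \<in> T' \<longrightarrow> b \<in> T')"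
  using prime_theory_mp prime_theory_Imp_witness[OF assms] by blast

lemma prov_if_prime_theories: "(\<And>T. prime_theory T \<Longrightarrow> \<phi> \<in> T) \<Longrightarrow> prov \<phi>"
  using prime_theory_extension[of "{}" \<phi>] derivable_empty_imp_prov by blast

lemma prov_Imp_if_prime_theories:
  "(\<And>T. prime_theory T \<Longrightarrow> a \<in> T \<Longrightarrow> b \<in> T) \<Longrightarrow> prov (Imp a b)"
  by (rule prov_if_prime_theories) (use prime_theory_Imp_witness in blast)

lemma prime_theory_Nxt_preimage:
  assumes "prime_theory T"
  shows "prime_theory {\<phi>. Nxt \<phi> \<in> T}"
proof -
  have "Nxt \<psi> \<in> T" if "derivable {\<phi>. Nxt \<phi> \<in> T} \<psi>" for \<psi>
    using that
  proof (induction rule: derivable.induct)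
    case (derivable_prov \<phi>)
    then show ?case using assms nec prime_theory_prov by blast
  next
    case (derivable_mp a b)
    then show ?case using assms nxt_imp prime_theory_prov_mp prime_theory_mp by blast
  qed simp
  moreover have "Nxt Bot \<notin> T"
    using assms prime_theory_prov_mp nxt_bot prime_theory_Bot by blast
  moreover have "Nxt a \<in> T \<or> Nxt b \<in> T" if "Nxt (Or a b) \<in> T" for a b
    using that assms nxt_or prime_theory_prov_mp prime_theory_Or_iff by blast
  ultimately show ?thesis unfolding prime_theory_def by auto
qed

lemma prime_theory_foldr_And: "prime_theory T \<Longrightarrow> foldr And xs Top \<in> T \<longleftrightarrow> set xs \<subseteq> T"
  by (induction xs) (auto simp: prime_theory_And_iff prime_theory_Top)

lemma prime_theory_foldr_Or: "prime_theory T \<Longrightarrow> foldr Or xs Bot \<in> T \<longleftrightarrow> set xs \<inter> T \<noteq> {}"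
  by (induction xs) (auto simp: prime_theory_Or_iff prime_theory_Bot)

lemma set_some_list: "finite A \<Longrightarrow> set (SOME xs. set xs = A) = A"
  by (metis (mono_tags) finite_list someI_ex)

lemma prime_theory_BigAnd_iff: "prime_theory T \<Longrightarrow> finite A \<Longrightarrow> BigAnd A \<in> T \<longleftrightarrow> A \<subseteq> T"
  unfolding BigAnd_def by (simp add: prime_theory_foldr_And set_some_list)

lemma prime_theory_BigOr_iff: "prime_theory T \<Longrightarrow> finite A \<Longrightarrow> BigOr A \<in> T \<longleftrightarrow> A \<inter> T \<noteq> {}"
  unfolding BigOr_def by (simp add: prime_theory_foldr_Or set_some_list)

lemma prov_Dia_imp_BigAnd_if_prime_theories:
  assumes "finite \<Theta>"
    and base: "\<And>T. prime_theory T \<Longrightarrow> p \<in> T \<Longrightarrow> \<Theta> \<subseteq> T"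
    and step: "\<And>T. prime_theory T \<Longrightarrow> Nxt (BigAnd \<Theta>) \<in> T \<Longrightarrow> \<Theta> \<subseteq> T"
  shows "prov (Imp (Dia p) (BigAnd \<Theta>))"
proof -
  have "prov (Imp (Nxt (BigAnd \<Theta>)) (BigAnd \<Theta>))"
    by (rule prov_Imp_if_prime_theories) (use step prime_theory_BigAnd_iff assms(1) in blast)
  then have "prov (Imp (Dia (BigAnd \<Theta>)) (BigAnd \<Theta>))" by (rule dia_ind)
  moreover have "prov (Imp p (BigAnd \<Theta>))"
    by (rule prov_Imp_if_prime_theories) (use base prime_theory_BigAnd_iff assms(1) in blast)
  ultimately show ?thesis using dia_mono prov_imp_trans by blast
qed

section \<open>The canonical deterministic weak quasimodel\<close>

definition theory_type :: "fm set \<Rightarrow> ftype" where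
  "theory_type T = (UNIV - T, T)"

definition canonical_points :: "ftype set" where
  "canonical_points = theory_type ` {T. prime_theory T}"

definition next_type :: "ftype \<Rightarrow> ftype" where
  "next_type z = theory_type {\<phi>. Nxt \<phi> \<in> snd z}"

definition canonical_frame :: "ftype kframe" where
  "canonical_frame = \<lparr> pts = canonical_points,
     le = (\<lambda>x y. x \<in> canonical_points \<and> y \<in> canonical_points \<and> snd x \<subseteq> snd y),
     rel = (\<lambda>x y. x \<in> canonical_points \<and> y = next_type x),
     lab = id \<rparr>"

lemma theory_type_simps [simp]: "fst (theory_type T) = UNIV - T" "snd (theory_type T) = T"
  by (simp_all add: theory_type_def)

lemma canonical_points_iff: "z \<in> canonical_points \<longleftrightarrow> prime_theory (snd z) \<and> fst z = UNIV - snd z"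
  unfolding canonical_points_def theory_type_def by (cases z) auto

lemma theory_type_in_canonical_points [simp]:
  "theory_type T \<in> canonical_points \<longleftrightarrow> prime_theory T"
  by (simp add: canonical_points_iff)

lemma canonical_frame_simps:
  "pts canonical_frame = canonical_points"
  "le canonical_frame x y \<longleftrightarrow> x \<in> canonical_points \<and> y \<in> canonical_points \<and> snd x \<subseteq> snd y"
  "rel canonical_frame x y \<longleftrightarrow> x \<in> canonical_points \<and> y = next_type x"
  "lab canonical_frame x = x"
  by (simp_all add: canonical_frame_def)

lemma snd_next_type: "snd (next_type z) = {\<phi>. Nxt \<phi> \<in> snd z}"
  by (simp add: next_type_def)

lemma next_type_in_canonical_points: "z \<in> canonical_points \<Longrightarrow> next_type z \<in> canonical_points"
  by (simp add: next_type_def canonical_points_iff prime_theory_Nxt_preimage)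

lemma is_type_canonical_point:
  assumes "z \<in> canonical_points"
  shows "is_type UNIV z"
proof -
  have T: "prime_theory (snd z)" and fst_z: "fst z = UNIV - snd z"
    using assms by (auto simp: canonical_points_iff)
  show ?thesis unfolding is_type_def Let_def
  proof (intro conjI allI impI)
    show "fst z \<inter> snd z = {}" "fst z \<union> snd z = UNIV" using fst_z by auto
    show "Bot \<notin> snd z" using prime_theory_Bot[OF T] .
    fix p q
    show "And p q \<in> snd z \<longleftrightarrow> p \<in> snd z \<and> q \<in> snd z" using prime_theory_And_iff[OF T] .
    show "Or p q \<in> snd z \<longleftrightarrow> p \<in> snd z \<or> q \<in> snd z" using prime_theory_Or_iff[OF T] .
  next
    fix p q assume "Imp p q \<in> snd z"
    then show "p \<in> fst z \<or> q \<in> snd z" using prime_theory_mp[OF T] fst_z by blast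
  next
    fix p assume "Dia p \<in> fst z"
    then show "p \<in> fst z" using prime_theory_prov_mp[OF T prov_imp_Dia] fst_z by blast
  qed
qed

lemma sensT_canonical:
  assumes "z \<in> canonical_points"
  shows "sensT z (next_type z)"
proof -
  have T: "prime_theory (snd z)" and fst_z: "fst z = UNIV - snd z"
    using assms by (auto simp: canonical_points_iff)
  have "Nxt (Dia p) \<in> snd z" if "Dia p \<in> snd z" "p \<notin> snd z" for p
    using that prime_theory_Or_iff[OF T] prime_theory_prov_mp[OF T prov_Dia_unfold] by blast
  moreover have "Dia p \<in> snd z" if "Nxt (Dia p) \<in> snd z" for p
    using that prime_theory_prov_mp[OF T prov_Nxt_Dia_imp_Dia] by blast
  ultimately show ?thesis
    unfolding sensT_def next_type_def using fst_z by auto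
qed

lemma weak_qm_canonical_frame: "weak_qm UNIV canonical_frame"
  unfolding weak_qm_def labelled_frame_def forward_confluent_rel_def
proof (intro conjI allI impI ballI)
  fix x y assume "le canonical_frame x y \<and> le canonical_frame y x"
  then show "x = y" by (auto simp: canonical_frame_simps canonical_points_iff prod_eq_iff)
next
  fix w p q assume w: "w \<in> pts canonical_frame" and "Imp p q \<in> fst (lab canonical_frame w)"
  then have "Imp p q \<notin> snd w" "prime_theory (snd w)"
    by (auto simp: canonical_frame_simps canonical_points_iff)
  then obtain T where "prime_theory T" "snd w \<subseteq> T" "p \<in> T" "q \<notin> T"
    using prime_theory_Imp_witness by blast
  then show "\<exists>v\<in>pts canonical_frame. le canonical_frame w v
      \<and> p \<in> snd (lab canonical_frame v) \<and> q \<in> fst (lab canonical_frame v)"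
    using w by (intro bexI[of _ "theory_type T"]) (auto simp: canonical_frame_simps)
next
  fix w w' v assume "le canonical_frame w w' \<and> rel canonical_frame w v"
  then show "\<exists>v'\<in>pts canonical_frame. le canonical_frame v v' \<and> rel canonical_frame w' v'"
    by (intro bexI[of _ "next_type w'"])
      (auto simp: canonical_frame_simps next_type_in_canonical_points snd_next_type)
qed (auto simp: canonical_frame_simps is_type_canonical_point next_type_in_canonical_points
  sensT_canonical)

lemma deterministic_canonical_frame: "deterministic canonical_frame"
  unfolding deterministic_def canonical_frame_simps by blast

lemma restrict_frame_simps:
  "pts (restrict_frame F P) = P"
  "le (restrict_frame F P) x y \<longleftrightarrow> x \<in> P \<and> y \<in> P \<and> le F x y"
  "rel (restrict_frame F P) x y \<longleftrightarrow> x \<in> P \<and> y \<in> P \<and> rel F x y"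
  "lab (restrict_frame F P) = lab F"
  by (simp_all add: restrict_frame_def)

lemma labelled_frameD:
  assumes "labelled_frame \<Sigma> F"
  shows "le F x y \<Longrightarrow> x \<in> pts F \<and> y \<in> pts F"
    and "x \<in> pts F \<Longrightarrow> le F x x"
    and "le F x y \<Longrightarrow> le F y z \<Longrightarrow> le F x z"
    and "le F x y \<Longrightarrow> le F y x \<Longrightarrow> x = y"
    and "w \<in> pts F \<Longrightarrow> is_type \<Sigma> (lab F w)"
    and "le F w v \<Longrightarrow> snd (lab F w) \<subseteq> snd (lab F v)"
    and "w \<in> pts F \<Longrightarrow> Imp p q \<in> fst (lab F w)
      \<Longrightarrow> \<exists>v\<in>pts F. le F w v \<and> p \<in> snd (lab F v) \<and> q \<in> fst (lab F v)"
  using assms unfolding labelled_frame_def by blast+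

lemma weak_qm_restrict_frame:
  assumes wqm: "weak_qm \<Sigma> F" and P: "P \<subseteq> pts F"
    and up: "\<And>w w'. w \<in> P \<Longrightarrow> le F w w' \<Longrightarrow> w' \<in> P"
  shows "weak_qm \<Sigma> (restrict_frame F P)"
proof -
  have lf: "labelled_frame \<Sigma> F" and fc: "forward_confluent_rel F"
    and sens: "\<forall>w v. rel F w v \<longrightarrow> sensT (lab F w) (lab F v)"
    using wqm unfolding weak_qm_def by blast+
  show ?thesis
    unfolding weak_qm_def labelled_frame_def forward_confluent_rel_def restrict_frame_simps
  proof (intro conjI allI impI ballI)
    fix w p q assume "w \<in> P" "Imp p q \<in> fst (lab F w)"
    then obtain v where "le F w v" "p \<in> snd (lab F v)" "q \<in> fst (lab F v)"
      using labelled_frameD(7)[OF lf] P by blast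
    then show "\<exists>v\<in>P. (w \<in> P \<and> v \<in> P \<and> le F w v) \<and> p \<in> snd (lab F v) \<and> q \<in> fst (lab F v)"
      using up \<open>w \<in> P\<close> by blast
  next
    fix w w' v assume wv: "(w \<in> P \<and> w' \<in> P \<and> le F w w') \<and> w \<in> P \<and> v \<in> P \<and> rel F w v"
    then obtain v' where "le F v v'" "rel F w' v'"
      using fc unfolding forward_confluent_rel_def by blast
    then show "\<exists>v'\<in>P. (v \<in> P \<and> v' \<in> P \<and> le F v v') \<and> w' \<in> P \<and> v' \<in> P \<and> rel F w' v'"
      using up wv by blast
  qed (use P sens in \<open>auto dest: labelled_frameD(1,5,6)[OF lf] intro: labelled_frameD(2,3,4)[OF lf]\<close>)
qed

definition strictly_above :: "'w kframe \<Rightarrow> 'w \<Rightarrow> 'w set" where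
  "strictly_above F u = {v \<in> pts F. le F u v \<and> v \<noteq> u}"

definition unprovable_Sim_points :: "'w kframe \<Rightarrow> 'w set" where
  "unprovable_Sim_points F = {w \<in> pts F. \<not> prov (Sim F w)}"

locale finite_labelled_frame =
  fixes \<Sigma> :: "fm set" and I :: "'w kframe"
  assumes finite_\<Sigma>: "finite \<Sigma>"
    and finite_pts: "finite (pts I)"
    and labelled: "labelled_frame \<Sigma> I"
begin

lemma finite_strictly_above: "finite (strictly_above I u)"
  using finite_pts by (simp add: strictly_above_def)

lemma card_strictly_above_less:
  assumes "v \<in> strictly_above I u"
  shows "card (strictly_above I v) < card (strictly_above I u)"
proof (rule psubset_card_mono[OF finite_strictly_above])
  have "strictly_above I v \<subseteq> strictly_above I u"
    using assms labelled_frameD(3,4)[OF labelled] unfolding strictly_above_def by blast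
  moreover have "v \<notin> strictly_above I v" by (simp add: strictly_above_def)
  ultimately show "strictly_above I v \<subset> strictly_above I u" using assms by blast
qed

lemma card_strictly_above_less_card_pts:
  assumes "u \<in> pts I"
  shows "card (strictly_above I u) < card (pts I)"
proof -
  have "card (strictly_above I u) \<le> card (pts I - {u})"
    using finite_pts by (intro card_mono) (auto simp: strictly_above_def)
  also have "\<dots> < card (pts I)" using finite_pts assms by (rule card_Diff1_less)
  finally show ?thesis .
qed

lemma simf_stable:
  "card (strictly_above I u) < n \<Longrightarrow> card (strictly_above I u) < m \<Longrightarrow> simf I n u = simf I m u"
proof (induction "card (strictly_above I u)" arbitrary: u n m rule: less_induct)
  case less
  obtain n' m' where nm: "n = Suc n'" "m = Suc m'"
    using less(2,3) by (cases n; cases m) auto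
  have "simf I n' v = simf I m' v" if "v \<in> strictly_above I u" for v
    using less(1)[of v n' m'] card_strictly_above_less[OF that] less(2,3) nm by simp
  then have "simf I n' ` {v \<in> pts I. le I u v \<and> v \<noteq> u} = simf I m' ` {v \<in> pts I. le I u v \<and> v \<noteq> u}"
    unfolding strictly_above_def by (rule image_cong[OF refl])
  then show ?case by (simp add: nm)
qed

lemma Sim_unfold:
  assumes "u \<in> pts I"
  shows "Sim I u = Imp (BigAnd (snd (lab I u)))
    (Or (BigOr (fst (lab I u))) (BigOr (Sim I ` strictly_above I u)))"
proof -
  have less: "card (strictly_above I u) < card (pts I)"
    using card_strictly_above_less_card_pts[OF assms] .
  then obtain k where k: "card (pts I) = Suc k" by (cases "card (pts I)") auto
  have "simf I k v = Sim I v" if "v \<in> strictly_above I u" for v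
    unfolding Sim_def using card_strictly_above_less[OF that] less k
    by (intro simf_stable) linarith+
  then have "simf I k ` strictly_above I u = Sim I ` strictly_above I u"
    by (rule image_cong[OF refl])
  then show ?thesis
    by (simp add: Sim_def k strictly_above_def)
qed

lemma lab_partition: "u \<in> pts I \<Longrightarrow> fst (lab I u) \<union> snd (lab I u) = \<Sigma>"
  using labelled_frameD(5)[OF labelled] unfolding is_type_def Let_def by blast

lemma finite_lab:
  assumes "u \<in> pts I"
  shows "finite (fst (lab I u))" "finite (snd (lab I u))"
  using lab_partition[OF assms] finite_\<Sigma> by (metis finite_Un)+

lemma prime_theory_Sim_iff:
  assumes "u \<in> pts I" and "prime_theory T"
  shows "Sim I u \<in> T \<longleftrightarrow> (\<forall>T'. prime_theory T' \<and> T \<subseteq> T' \<and> snd (lab I u) \<subseteq> T'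
    \<longrightarrow> fst (lab I u) \<inter> T' \<noteq> {} \<or> (\<exists>v\<in>strictly_above I u. Sim I v \<in> T'))"
proof -
  have "Or (BigOr (fst (lab I u))) (BigOr (Sim I ` strictly_above I u)) \<in> T'
      \<longleftrightarrow> fst (lab I u) \<inter> T' \<noteq> {} \<or> (\<exists>v\<in>strictly_above I u. Sim I v \<in> T')"
    if "prime_theory T'" for T'
    using that prime_theory_Or_iff prime_theory_BigOr_iff finite_lab[OF assms(1)]
      finite_strictly_above by auto
  moreover have "BigAnd (snd (lab I u)) \<in> T' \<longleftrightarrow> snd (lab I u) \<subseteq> T'" if "prime_theory T'" for T'
    using that prime_theory_BigAnd_iff finite_lab[OF assms(1)] by blast
  ultimately show ?thesis
    unfolding Sim_unfold[OF assms(1)] prime_theory_Imp_iff[OF assms(2)] by blast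
qed

lemma Sim_notin_if_simulation:
  assumes E: "is_simulation I canonical_frame E" and "E u z"
  shows "Sim I u \<notin> snd z"
  using assms(2)
proof (induction "card (strictly_above I u)" arbitrary: u z rule: less_induct)
  case less
  have u: "u \<in> pts I" and z: "prime_theory (snd z)" "fst z = UNIV - snd z"
    and sub: "subT (lab I u) z"
    using E less(2) unfolding is_simulation_def canonical_frame_simps canonical_points_iff
    by blast+
  show ?case
  proof
    assume "Sim I u \<in> snd z"
    moreover have "snd (lab I u) \<subseteq> snd z" "fst (lab I u) \<inter> snd z = {}"
      using sub z(2) unfolding subT_def by blast+
    ultimately obtain v where v: "v \<in> strictly_above I u" "Sim I v \<in> snd z"
      using prime_theory_Sim_iff[OF u z(1), THEN iffD1, rule_format, of "snd z"] z(1) by blast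
    then have "le I u v" by (simp add: strictly_above_def)
    then obtain z' where "snd z \<subseteq> snd z'" "E v z'"
      using E less(2) unfolding is_simulation_def canonical_frame_simps by blast
    then show False
      using less(1)[OF card_strictly_above_less[OF v(1)]] v(2) by blast
  qed
qed

definition canonical_simulation :: "'w \<Rightarrow> ftype \<Rightarrow> bool" where
  "canonical_simulation u z \<longleftrightarrow> u \<in> pts I \<and> z \<in> canonical_points \<and> subT (lab I u) z
     \<and> (\<forall>v\<in>strictly_above I u. Sim I v \<notin> snd z)"

lemma canonical_simulation_extension:
  assumes "u \<in> pts I" "prime_theory T" "Sim I u \<notin> T"
  shows "\<exists>T'. T \<subseteq> T' \<and> canonical_simulation u (theory_type T')"
  using assms prime_theory_Sim_iff[OF assms(1,2)]
  by (auto simp: canonical_simulation_def subT_def)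

lemma is_simulation_canonical_simulation: "is_simulation I canonical_frame canonical_simulation"
  unfolding is_simulation_def
proof (intro conjI allI impI)
  fix u u' z assume u: "canonical_simulation u z \<and> le I u u'"
  show "\<exists>z'\<in>pts canonical_frame. le canonical_frame z z' \<and> canonical_simulation u' z'"
  proof (cases "u' = u")
    case True
    then show ?thesis using u by (auto simp: canonical_frame_simps canonical_simulation_def)
  next
    case False
    then have "u' \<in> strictly_above I u"
      using u labelled_frameD(1)[OF labelled] unfolding strictly_above_def by blast
    then have "Sim I u' \<notin> snd z" "u' \<in> pts I" "prime_theory (snd z)"
      using u by (auto simp: canonical_simulation_def strictly_above_def canonical_points_iff)
    then obtain T' where "snd z \<subseteq> T'" "canonical_simulation u' (theory_type T')"
      using canonical_simulation_extension by blast
    then show ?thesis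
      using u by (intro bexI[of _ "theory_type T'"])
        (auto simp: canonical_frame_simps canonical_simulation_def)
  qed
qed (auto simp: canonical_simulation_def canonical_frame_simps)

lemma simulates_canonicalD:
  assumes "simulates I canonical_frame u z"
  shows "u \<in> pts I" "prime_theory (snd z)" "fst z = UNIV - snd z" "subT (lab I u) z"
  using assms unfolding simulates_def is_simulation_def canonical_frame_simps canonical_points_iff
  by blast+

lemma Sim_notin_if_simulates: "simulates I canonical_frame u z \<Longrightarrow> Sim I u \<notin> snd z"
  unfolding simulates_def using Sim_notin_if_simulation by blast

lemma simulates_extension:
  assumes "u \<in> pts I" "prime_theory T" "Sim I u \<notin> T"
  shows "\<exists>T'. T \<subseteq> T' \<and> simulates I canonical_frame u (theory_type T')"
  using canonical_simulation_extension[OF assms] is_simulation_canonical_simulation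
  unfolding simulates_def by blast

lemma simulated_iff_not_prov_Sim:
  assumes "u \<in> pts I"
  shows "(\<exists>z. simulates I canonical_frame u z) \<longleftrightarrow> \<not> prov (Sim I u)"
proof
  assume "\<exists>z. simulates I canonical_frame u z"
  then show "\<not> prov (Sim I u)"
    using simulates_canonicalD Sim_notin_if_simulates prime_theory_prov by blast
next
  assume "\<not> prov (Sim I u)"
  then obtain T where "prime_theory T" "Sim I u \<notin> T" using prov_if_prime_theories by blast
  then show "\<exists>z. simulates I canonical_frame u z" using simulates_extension[OF assms] by blast
qed

lemma mem_unprovable_Sim_points_iff:
  "w \<in> unprovable_Sim_points I \<longleftrightarrow> (\<exists>z. simulates I canonical_frame w z)"
  unfolding unprovable_Sim_points_def
  using simulated_iff_not_prov_Sim simulates_canonicalD(1) by blast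

lemma unprovable_Sim_points_upward_closed:
  assumes "w \<in> unprovable_Sim_points I" "le I w w'"
  shows "w' \<in> unprovable_Sim_points I"
  using assms unfolding mem_unprovable_Sim_points_iff simulates_def is_simulation_def by blast

end

locale canonically_dynamic = finite_labelled_frame +
  assumes dynamic_canonical: "dynamic I canonical_frame (simulates I canonical_frame)"
begin

abbreviation P where "P \<equiv> unprovable_Sim_points I"

abbreviation R where "R \<equiv> restrict_frame I P"

lemma simulates_successor:
  assumes "simulates I canonical_frame u z"
  shows "\<exists>u'. rel R u u' \<and> simulates I canonical_frame u' (next_type z)"
proof -
  have "rel canonical_frame z (next_type z)"
    using simulates_canonicalD[OF assms] by (simp add: canonical_frame_simps canonical_points_iff)
  then obtain u' where "rel I u u'" "simulates I canonical_frame u' (next_type z)"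
    using dynamic_canonical assms unfolding dynamic_def by blast
  then show ?thesis
    using assms unfolding restrict_frame_simps mem_unprovable_Sim_points_iff by blast
qed

lemma restrict_serial: "w \<in> P \<Longrightarrow> \<exists>v. rel R w v"
  using simulates_successor mem_unprovable_Sim_points_iff by blast

lemma Sim_notin_successor:
  assumes "u \<in> pts I" "prime_theory T" "Sim I u \<notin> T"
  shows "\<exists>u' T'. rel R u u' \<and> prime_theory T' \<and> T \<subseteq> T' \<and> Nxt (Sim I u') \<notin> T'"
proof -
  obtain T' where "T \<subseteq> T'" and sim: "simulates I canonical_frame u (theory_type T')"
    using simulates_extension[OF assms] by blast
  moreover obtain u' where "rel R u u'"
    and "simulates I canonical_frame u' (next_type (theory_type T'))"
    using simulates_successor[OF sim] by blast
  then have "Nxt (Sim I u') \<notin> T'"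
    using Sim_notin_if_simulates by (fastforce simp: snd_next_type)
  ultimately show ?thesis
    using simulates_canonicalD(2)[OF sim] \<open>rel R u u'\<close> by auto
qed

lemma prime_theory_Sim_if_negative:
  assumes "u \<in> pts I" "p \<in> fst (lab I u)" "prime_theory T" "p \<in> T"
  shows "Sim I u \<in> T"
proof (rule ccontr)
  assume "Sim I u \<notin> T"
  then obtain T' where "T \<subseteq> T'" "simulates I canonical_frame u (theory_type T')"
    using simulates_extension assms(1,3) by blast
  then show False
    using simulates_canonicalD(4) assms(2,4) unfolding subT_def by fastforce
qed

lemma restrict_omega_sensible:
  assumes "sub_closed \<Sigma>" and w: "w \<in> P" and Dia_p: "Dia p \<in> snd (lab I w)"
  shows "\<exists>n v. (rel R ^^ n) w v \<and> p \<in> snd (lab I v)"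
proof (rule ccontr)
  assume never_p: "\<not> ?thesis"
  define reach where "reach = {u. \<exists>n. (rel R ^^ n) w u}"
  have "w \<in> reach" unfolding reach_def using relpowp_0_I[of "rel R" w] by blast
  have reach_step: "u \<in> reach \<Longrightarrow> rel R u u' \<Longrightarrow> u' \<in> reach" for u u'
    unfolding reach_def by (auto intro: relpowp_Suc_I)
  have "(rel R ^^ n) w u \<Longrightarrow> u \<in> P" for n u
    using w by (cases n) (auto simp: restrict_frame_simps)
  then have reach_pts: "reach \<subseteq> pts I"
    unfolding reach_def unprovable_Sim_points_def by blast
  then have finite_reach: "finite (Sim I ` reach)" using finite_pts finite_subset by blast
  have "w \<in> pts I" using w unfolding unprovable_Sim_points_def by blast
  then have "subf (Dia p) \<subseteq> \<Sigma>"
    using Dia_p lab_partition \<open>sub_closed \<Sigma>\<close> unfolding sub_closed_def by blast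
  then have "p \<in> \<Sigma>" using mem_subf_self[of p] by auto
  then have negative: "p \<in> fst (lab I u)" if "u \<in> reach" for u
    using that never_p lab_partition reach_pts unfolding reach_def by blast
  have "prov (Imp (Dia p) (BigAnd (Sim I ` reach)))"
  proof (rule prov_Dia_imp_BigAnd_if_prime_theories[OF finite_reach])
    fix T assume "prime_theory T" "p \<in> T"
    then show "Sim I ` reach \<subseteq> T"
      using prime_theory_Sim_if_negative negative reach_pts by blast
  next
    fix T assume T: "prime_theory T" "Nxt (BigAnd (Sim I ` reach)) \<in> T"
    show "Sim I ` reach \<subseteq> T"
    proof (rule ccontr)
      assume "\<not> ?thesis"
      then obtain u where "u \<in> reach" "Sim I u \<notin> T" by blast
      then obtain u' T' where u': "rel R u u'" "prime_theory T'" "T \<subseteq> T'" "Nxt (Sim I u') \<notin> T'"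
        using Sim_notin_successor T(1) reach_pts by blast
      have "prime_theory {\<phi>. Nxt \<phi> \<in> T'}" using prime_theory_Nxt_preimage u'(2) .
      moreover have "BigAnd (Sim I ` reach) \<in> {\<phi>. Nxt \<phi> \<in> T'}" using T(2) u'(3) by blast
      ultimately have "Sim I ` reach \<subseteq> {\<phi>. Nxt \<phi> \<in> T'}"
        using prime_theory_BigAnd_iff finite_reach by blast
      then show False using reach_step[OF \<open>u \<in> reach\<close> u'(1)] u'(4) by blast
    qed
  qed
  moreover obtain z where z: "simulates I canonical_frame w z"
    using w mem_unprovable_Sim_points_iff by blast
  moreover have "Dia p \<in> snd z"
    using simulates_canonicalD(4)[OF z] Dia_p unfolding subT_def by blast
  ultimately have "Sim I ` reach \<subseteq> snd z"
    using prime_theory_prov_mp prime_theory_BigAnd_iff simulates_canonicalD(2) finite_reach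
    by blast
  then show False using Sim_notin_if_simulates[OF z] \<open>w \<in> reach\<close> by blast
qed

lemma quasimodel_restrict:
  assumes "weak_qm \<Sigma> I" "sub_closed \<Sigma>"
  shows "quasimodel \<Sigma> R"
proof -
  have "P \<subseteq> pts I" unfolding unprovable_Sim_points_def by blast
  then have "weak_qm \<Sigma> R"
    using weak_qm_restrict_frame[OF assms(1)] unprovable_Sim_points_upward_closed by blast
  then show ?thesis
    unfolding quasimodel_def restrict_frame_simps(1,4)
    using restrict_serial restrict_omega_sensible[OF assms(2)] by blast
qed

end

theorem corollary7p4:
  fixes \<Sigma> :: "fm set" and I :: "'a kframe"
  assumes "finite \<Sigma>" and "sub_closed \<Sigma>"
    and "finite (pts I)" and "weak_qm \<Sigma> I"
    and "\<forall>A :: (fm set \<times> fm set) kframe. weak_qm UNIV A \<and> deterministic A \<longrightarrow>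
           is_simulation I A (simulates I A) \<and> dynamic I A (simulates I A)
           \<and> surjective_sim I A (simulates I A)"
  shows "quasimodel \<Sigma> (restrict_frame I {w \<in> pts I. \<not> prov (Sim I w)})
         \<and> finite {w \<in> pts I. \<not> prov (Sim I w)}"
proof -
  have "dynamic I canonical_frame (simulates I canonical_frame)"
    using assms(5) weak_qm_canonical_frame deterministic_canonical_frame by blast
  moreover have "labelled_frame \<Sigma> I" using assms(4) unfolding weak_qm_def by blast
  ultimately interpret canonically_dynamic \<Sigma> I
    using assms(1,3) by unfold_locales
  show ?thesis
    using quasimodel_restrict[OF assms(4,2)] assms(3)
    unfolding unprovable_Sim_points_def by auto
qed

end
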